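(* Let $\kappa<\lambda$ be infinite cardinals with $\kappa$ regular. Let $\mathcal I$ be a normal $\kappa^+$-complete ideal on $\mathcal P_{\kappa^+}(\lambda)$, and assume that the quotient forcing $\mathcal P(\mathcal P_{\kappa^+}(\lambda))/\mathcal I$ has a $\kappa$-closed dense subset. Then $\mathrm{RC}(\kappa,\lambda)$ holds: every non-special tree of height $\kappa$ and size at most $\lambda$ has a non-special subtree of height $\kappa$ and size less than $\kappa^+$.
   Context: For a set $X$ and cardinal $\mu$, $\mathcal P_\mu(X)$ is the set of subsets of $X$ of size less than $\mu$. An ideal $\mathcal I$ on $\mathcal P_{\kappa^+}(\lambda)$ is $\kappa^+$-complete if it is closed under unions of at most $\kappa$ many members, and normal if it is fine (for each $\xi<\lambda$, $\{x:\xi\notin x\}\in\mathcal I$) and for every $\mathcal I$-positive set $A$ and every function $f$ on $A$ with $f(x)\in x$ for all $x\in A$, $f$ is constant on an $\mathcal I$-positive subset of $A$. The forcing $\mathcal P(\mathcal P_{\kappa^+}(\lambda))/\mathcal I$ consists of the $\mathcal I$-positive subsets of $\mathcal P_{\kappa^+}(\lambda)$ modulo $\mathcal I$, ordered by inclusion modulo $\mathcal I$. A forcing is $\kappa$-closed if every descending sequence of conditions of length less than $\kappa$ has a lower bound. A tree is a partial order $(T,<_T)$ in which the predecessors of each node are well-ordered. For a regular cardinal $\kappa$ and a tree $T$ of height $\kappa$, $T$ is special if there is $f:T\to T$ with $f(t)<_T t$ for all $t$ and such that for every $t\in T$, $f^{-1}[\{t\}]$ is a union of fewer than $\kappa$ antichains.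 For regular $\kappa$ and cardinal $\mu\ge\kappa^+$, $\mathrm{RC}(\kappa,\mu)$ states that every non-special tree of height $\kappa$ and size at most $\mu$ has a non-special subtree of height $\kappa$ and size less than $\kappa^+$. *)

theory Defs
  imports Main
begin

unbundle cardinal_syntax

definition pred_set :: "'b set \<Rightarrow> ('b \<Rightarrow> 'b \<Rightarrow> bool) \<Rightarrow> 'b \<Rightarrow> 'b set" where
  "pred_set T lt t = {s \<in> T. lt s t}"

text \<open>Reflexive order relation on the predecessors of t (as a set of pairs,
as required by the HOL well-order library).\<close>
definition pred_rel :: "'b set \<Rightarrow> ('b \<Rightarrow> 'b \<Rightarrow> bool) \<Rightarrow> 'b \<Rightarrow> 'b rel" where
  "pred_rel T lt t = {(s, s'). s \<in> pred_set T lt t \<and> s' \<in> pred_set T lt t \<and> (s = s' \<or> lt s s')}"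

definition is_tree :: "'b set \<Rightarrow> ('b \<Rightarrow> 'b \<Rightarrow> bool) \<Rightarrow> bool" where
  "is_tree T lt \<longleftrightarrow>
     (\<forall>t\<in>T. \<not> lt t t) \<and>
     (\<forall>s\<in>T. \<forall>t\<in>T. \<forall>u\<in>T. lt s t \<longrightarrow> lt t u \<longrightarrow> lt s u) \<and>
     (\<forall>t\<in>T. Well_order (pred_rel T lt t))"

text \<open>Height of a tree, compared with an (infinite) cardinal given as a
cardinal order r: every node has height (order type of its predecessors)
below r, and every ordinal below r (an initial segment of r) is attained or
exceeded by the height of some node.\<close>
definition tree_height_is :: "'b set \<Rightarrow> ('b \<Rightarrow> 'b \<Rightarrow> bool) \<Rightarrow> 'k rel \<Rightarrow> bool" where
  "tree_height_is T lt r \<longleftrightarrow>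
     (\<forall>t\<in>T. pred_rel T lt t <o r) \<and>
     (\<forall>a\<in>Field r. \<exists>t\<in>T. Restr r (underS r a) \<le>o pred_rel T lt t)"

definition is_antichain :: "'b set \<Rightarrow> ('b \<Rightarrow> 'b \<Rightarrow> bool) \<Rightarrow> 'b set \<Rightarrow> bool" where
  "is_antichain T lt A \<longleftrightarrow> A \<subseteq> T \<and> (\<forall>s\<in>A. \<forall>t\<in>A. \<not> lt s t)"

definition special_tree :: "'b set \<Rightarrow> ('b \<Rightarrow> 'b \<Rightarrow> bool) \<Rightarrow> 'k rel \<Rightarrow> bool" where
  "special_tree T lt r \<longleftrightarrow>
     (\<exists>f. (\<forall>t\<in>T. f t \<in> T) \<and>
          (\<forall>t\<in>T. (\<exists>s\<in>T. lt s t) \<longrightarrow> lt (f t) t) \<and>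
          (\<forall>t\<in>T. \<exists>\<A>. |\<A>| <o r \<and> (\<forall>A\<in>\<A>. is_antichain T lt A) \<and>
                       \<Union>\<A> = {s \<in> T. f s = t}))"

text \<open>RC(kappa, mu), with kappa given by the cardinal order r and mu by the
cardinality of the set M; trees live in the type 'b.\<close>
definition RC :: "'k rel \<Rightarrow> 'm set \<Rightarrow> 'b itself \<Rightarrow> bool" where
  "RC r M (_ :: 'b itself) \<longleftrightarrow>
     (\<forall>(T :: 'b set) lt. is_tree T lt \<and> tree_height_is T lt r \<and> |T| \<le>o |M| \<and>
        \<not> special_tree T lt r \<longrightarrow>
        (\<exists>S \<subseteq> T. tree_height_is S lt r \<and> |S| <o cardSuc r \<and> \<not> special_tree S lt r))"

definition Pkl :: "'k rel \<Rightarrow> 'l set \<Rightarrow> 'l set set" where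
  "Pkl r L = {x. x \<subseteq> L \<and> |x| <o cardSuc r}"

definition is_ideal :: "'a set \<Rightarrow> 'a set set \<Rightarrow> bool" where
  "is_ideal X I \<longleftrightarrow> I \<subseteq> Pow X \<and> {} \<in> I \<and> X \<notin> I \<and>
     (\<forall>A\<in>I. \<forall>B. B \<subseteq> A \<longrightarrow> B \<in> I) \<and> (\<forall>A\<in>I. \<forall>B\<in>I. A \<union> B \<in> I)"

definition kappa_plus_complete :: "'k rel \<Rightarrow> 'a set set \<Rightarrow> bool" where
  "kappa_plus_complete r I \<longleftrightarrow> (\<forall>F \<subseteq> I. |F| \<le>o r \<longrightarrow> \<Union>F \<in> I)"

definition normal_ideal :: "'l set \<Rightarrow> 'l set set \<Rightarrow> 'l set set set \<Rightarrow> bool" where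
  "normal_ideal L X I \<longleftrightarrow>
     (\<forall>\<xi>\<in>L. {x \<in> X. \<xi> \<notin> x} \<in> I) \<and>
     (\<forall>A. A \<subseteq> X \<and> A \<notin> I \<longrightarrow>
        (\<forall>f. (\<forall>x\<in>A. f x \<in> x) \<longrightarrow> (\<exists>B \<subseteq> A. B \<notin> I \<and> (\<exists>\<xi>. \<forall>x\<in>B. f x = \<xi>))))"

definition I_equiv :: "'a set \<Rightarrow> 'a set set \<Rightarrow> 'a set rel" where
  "I_equiv X I = {(A, B). A \<subseteq> X \<and> B \<subseteq> X \<and> (A - B) \<union> (B - A) \<in> I}"

definition quot_conds :: "'a set \<Rightarrow> 'a set set \<Rightarrow> 'a set set set" where
  "quot_conds X I = {A. A \<subseteq> X \<and> A \<notin> I} // I_equiv X I"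

definition quot_le :: "'a set set \<Rightarrow> 'a set set \<Rightarrow> 'a set set \<Rightarrow> bool" where
  "quot_le I p q \<longleftrightarrow> (\<exists>A\<in>p. \<exists>B\<in>q. A - B \<in> I)"

definition dense_in :: "'p set \<Rightarrow> ('p \<Rightarrow> 'p \<Rightarrow> bool) \<Rightarrow> 'p set \<Rightarrow> bool" where
  "dense_in P le D \<longleftrightarrow> D \<subseteq> P \<and> (\<forall>p\<in>P. \<exists>d\<in>D. le d p)"

definition kappa_closed :: "'k rel \<Rightarrow> 'p set \<Rightarrow> ('p \<Rightarrow> 'p \<Rightarrow> bool) \<Rightarrow> bool" where
  "kappa_closed r D le \<longleftrightarrow>
     (\<forall>a\<in>Field r. \<forall>s. (\<forall>\<alpha>\<in>underS r a. s \<alpha> \<in> D) \<and>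
        (\<forall>\<alpha>\<in>underS r a. \<forall>\<beta>\<in>underS r a. (\<alpha>, \<beta>) \<in> r \<longrightarrow> le (s \<beta>) (s \<alpha>)) \<longrightarrow>
        (\<exists>q\<in>D. \<forall>\<alpha>\<in>underS r a. le q (s \<alpha>)))"

end

theory Submission
  imports Defs
begin

text \<open>Suppose every subtree of \<open>T\<close> of height \<open>\<kappa>\<close> and size at most \<open>\<kappa>\<close> is special, and code \<open>T\<close>
  into \<open>\<lambda>\<close> by an injection \<open>g\<close>. For \<open>I\<close>-almost every \<open>x \<in> P\<^sub>\<kappa>\<^sub>+(\<lambda>)\<close> the trace
  \<open>T \<inter> g\<^sup>-\<^sup>1[x]\<close> is such a subtree, so it carries a specialising map \<open>F\<^sub>x\<close> together with
  antichain indices that are bounded below \<open>\<kappa>\<close> on each fibre, \<open>\<kappa>\<close> being regular.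
  By recursion along \<open>T\<close> choose conditions \<open>p\<^sub>t\<close> in the \<open>\<kappa>\<close>-closed dense set, decreasing along
  branches, such that \<open>p\<^sub>t\<close> decides (by normality) the value of \<open>F\<^sub>x(t)\<close>, the bound of the
  fibre of \<open>t\<close> and the index of \<open>t\<close>. If \<open>s < t\<close> then \<open>p\<^sub>t \<le> p\<^sub>s\<close>, so the decisions at \<open>s\<close>
  and \<open>t\<close> hold at a common \<open>x\<close>. Hence the decided values specialise \<open>T\<close> itself, the fibre of
  \<open>u\<close> being covered by the antichains with index below the bound decided at \<open>u\<close>.\<close>

section \<open>Ideals and the quotient forcing\<close>

text \<open>\<open>p\<close> forces \<open>B\<close> into the generic ultrafilter; for positive \<open>B\<close> this says
  \<open>p \<le> [B]\<close>.\<close>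

definition forces :: "'a set set \<Rightarrow> 'a set set \<Rightarrow> 'a set \<Rightarrow> bool" where
  "forces I p B \<longleftrightarrow> (\<exists>A\<in>p. A - B \<in> I)"

lemma ideal_subset: "is_ideal X I \<Longrightarrow> A \<in> I \<Longrightarrow> B \<subseteq> A \<Longrightarrow> B \<in> I"
  unfolding is_ideal_def by blast

lemma ideal_Un: "is_ideal X I \<Longrightarrow> A \<in> I \<Longrightarrow> B \<in> I \<Longrightarrow> A \<union> B \<in> I"
  unfolding is_ideal_def by blast

lemma ideal_empty: "is_ideal X I \<Longrightarrow> {} \<in> I"
  unfolding is_ideal_def by blast

lemma ideal_diff_trans:
  assumes "is_ideal X I" "A - B \<in> I" "B - C \<in> I"
  shows "A - C \<in> I"
proof -
  have "(A - B) \<union> (B - C) \<in> I" using assms ideal_Un by blast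
  then show ?thesis by (rule ideal_subset[OF assms(1)]) blast
qed

lemma ideal_positive_if_diff:
  assumes "is_ideal X I" "A \<notin> I" "A - B \<in> I"
  shows "B \<notin> I"
proof
  assume "B \<in> I"
  then have "(A - B) \<union> B \<in> I" using assms ideal_Un by blast
  then have "A \<in> I" by (rule ideal_subset[OF assms(1)]) blast
  with assms(2) show False by blast
qed

lemma quot_condsE:
  assumes "p \<in> quot_conds X I"
  obtains B where "B \<subseteq> X" "B \<notin> I" "p = I_equiv X I `` {B}"
  using assms unfolding quot_conds_def by (auto elim!: quotientE)

lemma I_equiv_class_in_quot_conds:
  "B \<subseteq> X \<Longrightarrow> B \<notin> I \<Longrightarrow> I_equiv X I `` {B} \<in> quot_conds X I"
  unfolding quot_conds_def by (auto intro!: quotientI)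

lemma I_equiv_class_self: "is_ideal X I \<Longrightarrow> B \<subseteq> X \<Longrightarrow> B \<in> I_equiv X I `` {B}"
  by (simp add: I_equiv_def ideal_empty)

lemma quot_conds_diff:
  assumes "is_ideal X I" "p \<in> quot_conds X I" "A \<in> p" "A' \<in> p"
  shows "A - A' \<in> I"
proof -
  obtain B where "p = I_equiv X I `` {B}" using assms(2) by (rule quot_condsE)
  then have "A - B \<in> I" "B - A' \<in> I"
    using assms(3,4) by (auto simp: I_equiv_def intro: ideal_subset[OF assms(1)])
  then show ?thesis by (rule ideal_diff_trans[OF assms(1)])
qed

lemma quot_conds_member:
  assumes "is_ideal X I" "p \<in> quot_conds X I" "A \<in> p"
  shows "A \<subseteq> X" "A \<notin> I"
proof -
  obtain B where B: "B \<subseteq> X" "B \<notin> I" "p = I_equiv X I `` {B}" using assms(2) by (rule quot_condsE)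
  then show "A \<subseteq> X" using assms(3) by (simp add: I_equiv_def)
  have "B \<in> p" using B I_equiv_class_self[OF assms(1)] by blast
  then have "B - A \<in> I" using quot_conds_diff[OF assms(1,2)] assms(3) by blast
  then show "A \<notin> I" using ideal_positive_if_diff[OF assms(1) B(2)] by blast
qed

lemma quot_conds_nonempty: "is_ideal X I \<Longrightarrow> p \<in> quot_conds X I \<Longrightarrow> \<exists>A. A \<in> p"
  by (metis I_equiv_class_self quot_condsE)

lemma quot_le_refl:
  assumes "is_ideal X I" "p \<in> quot_conds X I"
  shows "quot_le I p p"
  using quot_conds_nonempty[OF assms] ideal_empty[OF assms(1)] unfolding quot_le_def by force

lemma forces_quot_le:
  assumes "is_ideal X I" "q \<in> quot_conds X I" "quot_le I p q" "forces I q B"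
  shows "forces I p B"
proof -
  obtain A A' where A: "A \<in> p" "A' \<in> q" "A - A' \<in> I" using assms(3) unfolding quot_le_def by blast
  obtain A'' where A'': "A'' \<in> q" "A'' - B \<in> I" using assms(4) unfolding forces_def by blast
  have "A' - A'' \<in> I" using quot_conds_diff[OF assms(1,2) A(2) A''(1)] .
  then have "A - B \<in> I" using A(3) A''(2) ideal_diff_trans[OF assms(1)] by blast
  then show ?thesis unfolding forces_def using A(1) by blast
qed

lemma quot_le_trans:
  assumes "is_ideal X I" "q \<in> quot_conds X I" "quot_le I p q" "quot_le I q s"
  shows "quot_le I p s"
proof -
  obtain A C where "A \<in> q" "C \<in> s" "A - C \<in> I" using assms(4) unfolding quot_le_def by blast
  then have "forces I p C" using forces_quot_le[OF assms(1-3)] unfolding forces_def by blast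
  with \<open>C \<in> s\<close> show ?thesis unfolding forces_def quot_le_def by blast
qed

lemma forces_mono:
  assumes "is_ideal X I" "forces I p B" "B \<subseteq> B'"
  shows "forces I p B'"
  using assms ideal_subset[OF assms(1)] unfolding forces_def by blast

lemma forces_Int_nonempty:
  assumes "is_ideal X I" "p \<in> quot_conds X I" "forces I p B" "forces I p B'"
  shows "B \<inter> B' \<noteq> {}"
proof
  assume disjoint: "B \<inter> B' = {}"
  obtain A A' where A: "A \<in> p" "A - B \<in> I" "A' \<in> p" "A' - B' \<in> I"
    using assms(3,4) unfolding forces_def by blast
  have "A - B' \<in> I" using A quot_conds_diff[OF assms(1,2)] ideal_diff_trans[OF assms(1)] by blast
  then have "(A - B) \<union> (A - B') \<in> I" using A(2) ideal_Un[OF assms(1)] by blast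
  then have "A \<in> I" by (rule ideal_subset[OF assms(1)]) (use disjoint in blast)
  then show False using quot_conds_member[OF assms(1,2) A(1)] by blast
qed

lemma dense_forces_positive_subset:
  assumes "is_ideal X I" "dense_in (quot_conds X I) (quot_le I) D"
    and "q \<in> quot_conds X I" "A \<in> q" "B \<subseteq> A" "B \<notin> I"
  shows "\<exists>d\<in>D. quot_le I d q \<and> forces I d B"
proof -
  have BX: "B \<subseteq> X" using quot_conds_member[OF assms(1,3,4)] assms(5) by blast
  let ?p = "I_equiv X I `` {B}"
  have p: "?p \<in> quot_conds X I" using I_equiv_class_in_quot_conds[OF BX assms(6)] .
  then obtain d where d: "d \<in> D" "quot_le I d ?p" using assms(2) unfolding dense_in_def by blast
  have "B \<in> ?p" using I_equiv_class_self[OF assms(1) BX] .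
  moreover have "B - A = {}" "B - B = {}" using assms(5) by auto
  ultimately have "quot_le I ?p q" "forces I ?p B"
    using assms(4) ideal_empty[OF assms(1)] unfolding quot_le_def forces_def by metis+
  then show ?thesis using d quot_le_trans[OF assms(1) p] forces_quot_le[OF assms(1) p] by blast
qed

lemma normal_ideal_not_superset:
  assumes "normal_ideal L X I" "kappa_plus_complete r I" "Z \<subseteq> L" "|Z| \<le>o r"
  shows "{x \<in> X. \<not> Z \<subseteq> x} \<in> I"
proof -
  let ?F = "(\<lambda>z. {x \<in> X. z \<notin> x}) ` Z"
  have "?F \<subseteq> I" using assms(1,3) unfolding normal_ideal_def by blast
  moreover have "|?F| \<le>o r" using card_of_image assms(4) ordLeq_transitive by blast
  ultimately have "\<Union>?F \<in> I" using assms(2) unfolding kappa_plus_complete_def by blast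
  moreover have "{x \<in> X. \<not> Z \<subseteq> x} = \<Union>?F" by auto
  ultimately show ?thesis by simp
qed

lemma normal_ideal_pressing_down_inj:
  assumes "normal_ideal L X I" "A \<subseteq> X" "A \<notin> I" "inj_on h Y" "\<forall>x\<in>A. k x \<in> Y \<and> h (k x) \<in> x"
  obtains B v where "B \<subseteq> A" "B \<notin> I" "\<forall>x\<in>B. k x = v"
proof -
  obtain B \<xi> where B: "B \<subseteq> A" "B \<notin> I" "\<forall>x\<in>B. h (k x) = \<xi>"
    using assms(1)[unfolded normal_ideal_def, THEN conjunct2, rule_format, of A "\<lambda>x. h (k x)"]
      assms(2,3,5) by blast
  then have "\<forall>x\<in>B. k x = the_inv_into Y h \<xi>"
    using assms(4,5) the_inv_into_f_f by fastforce
  with B show ?thesis using that by blast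
qed

section \<open>Cardinals and trees\<close>

lemma finite_ordLess_Cinfinite:
  assumes "finite A" "Cinfinite r"
  shows "|A| <o r"
proof -
  have "|A| <o |Field r|"
    using finite_ordLess_infinite[OF card_of_Well_order card_of_Well_order] assms
    by (force simp: cinfinite_def Field_card_of)
  then show ?thesis using card_of_Field_ordIso assms(2) ordLess_ordIso_trans by blast
qed

lemma card_of_under_ordLess:
  assumes "Cinfinite r"
  shows "|under r b| <o r"
proof (cases "b \<in> Field r")
  case True
  have "|underS r b| <o r" using card_of_underS[OF _ True] assms by blast
  then have "|underS r b \<union> {b}| <o r"
    using Un_Cinfinite_bound_strict[OF _ finite_ordLess_Cinfinite[OF _ assms] assms] by blast
  moreover have "under r b \<subseteq> underS r b \<union> {b}" unfolding under_def underS_def by blast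
  ultimately show ?thesis using card_of_mono1 ordLeq_ordLess_trans by blast
next
  case False
  then have "under r b = {}" unfolding under_def Field_def by blast
  then show ?thesis using finite_ordLess_Cinfinite[OF finite.emptyI assms] by simp
qed

lemma regularCard_bounded:
  assumes "Card_order r" "regularCard r" "K \<subseteq> Field r" "|K| <o r"
  shows "\<exists>b\<in>Field r. K \<subseteq> under r b"
proof (rule regularCard_UNION[OF assms(1,2)])
  have wo: "wo_rel r" using assms(1) card_order_on_well_order_on wo_rel_def by blast
  show "relChain r (under r)"
    using wo_rel.TRANS[OF wo] unfolding relChain_def under_def trans_def by blast
  show "K \<subseteq> (\<Union>b\<in>Field r. under r b)"
    using wo_rel.REFL[OF wo] assms(3) unfolding refl_on_def under_def by blast
qed (rule assms(4))

lemma regularCard_bounded_injection: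
  assumes "Card_order r" "regularCard r" "|A| <o r"
  shows "\<exists>\<beta>\<in>Field r. \<exists>h. inj_on h A \<and> h ` A \<subseteq> under r \<beta>"
proof -
  have "|A| \<le>o |Field r|"
    using ordLess_imp_ordLeq[OF ordLess_ordIso_trans[OF assms(3)]] card_of_Field_ordIso[OF assms(1)]
      ordIso_symmetric by blast
  then obtain h where h: "inj_on h A" "h ` A \<subseteq> Field r" unfolding card_of_ordLeq[symmetric] by blast
  moreover have "|h ` A| <o r" using ordLeq_ordLess_trans[OF card_of_image assms(3)] .
  ultimately show ?thesis using regularCard_bounded[OF assms(1,2)] by blast
qed

lemma ordLess_if_card_of_Field_ordLess:
  assumes "Card_order r" "Well_order w" "|Field w| <o r"
  shows "w <o r"
proof -
  have "\<not> r \<le>o w"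
  proof
    assume "r \<le>o w"
    then have "|Field r| \<le>o |Field w|" by (rule card_of_mono2)
    then have "r \<le>o |Field w|" using card_of_Field_ordIso[OF assms(1)] ordIso_ordLeq_trans
      ordIso_symmetric by blast
    then show False using assms(3) not_ordLess_ordLeq by blast
  qed
  then show ?thesis
    using ordLess_or_ordLeq[OF assms(2) card_order_on_well_order_on[OF assms(1)]] by blast
qed

lemma kappa_closed_lower_bound:
  assumes "kappa_closed r D le" "Card_order r" "Well_order w" "w <o r"
    and "\<forall>s\<in>Field w. P s \<in> D"
    and "\<forall>s\<in>Field w. \<forall>s'\<in>Field w. (s, s') \<in> w \<longrightarrow> le (P s') (P s)"
  shows "\<exists>q\<in>D. \<forall>s\<in>Field w. le q (P s)"
proof -
  have r: "Well_order r" using assms(2) by (rule card_order_on_well_order_on)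
  obtain a where a: "a \<in> Field r" "w =o Restr r (underS r a)"
    using ordLess_iff_ordIso_Restr[OF r assms(3)] assms(4) by blast
  from a(2) have "Restr r (underS r a) =o w" by (rule ordIso_symmetric)
  then obtain h where iso: "iso (Restr r (underS r a)) w h" unfolding ordIso_def by blast
  have "Field (Restr r (underS r a)) = underS r a"
    using Field_Restr_ofilter[OF r] wo_rel.underS_ofilter[of r a] r unfolding wo_rel_def by blast
  with iso have h: "bij_betw h (underS r a) (Field w)"
    and iso_r: "\<forall>\<alpha>\<in>underS r a. \<forall>\<beta>\<in>underS r a. (\<alpha>, \<beta>) \<in> Restr r (underS r a) \<longleftrightarrow> (h \<alpha>, h \<beta>) \<in> w"
    unfolding iso_iff2 by simp_all
  have "\<forall>\<alpha>\<in>underS r a. P (h \<alpha>) \<in> D" using assms(5) bij_betwE[OF h] by blast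
  moreover have "le (P (h \<beta>)) (P (h \<alpha>))"
    if "\<alpha> \<in> underS r a" "\<beta> \<in> underS r a" "(\<alpha>, \<beta>) \<in> r" for \<alpha> \<beta>
  proof -
    have "(h \<alpha>, h \<beta>) \<in> w" using iso_r that by blast
    then show ?thesis using assms(6) bij_betwE[OF h] that(1,2) by blast
  qed
  ultimately obtain q where "q \<in> D" "\<forall>\<alpha>\<in>underS r a. le q (P (h \<alpha>))"
    using assms(1)[unfolded kappa_closed_def, THEN bspec, OF a(1), THEN spec[of _ "\<lambda>\<alpha>. P (h \<alpha>)"]]
    by blast
  moreover have "Field w = h ` underS r a" using h by (simp add: bij_betw_def)
  ultimately show ?thesis by auto
qed

lemma Field_pred_rel: "Field (pred_rel T lt t) = pred_set T lt t"
  unfolding pred_rel_def Field_def by auto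

lemma tree_wf:
  assumes "is_tree T lt"
  shows "wf {(s, t). s \<in> T \<and> t \<in> T \<and> lt s t}" (is "wf ?R")
proof (rule wfI_min)
  fix x :: 'a and Q assume "x \<in> Q"
  show "\<exists>z\<in>Q. \<forall>y. (y, z) \<in> ?R \<longrightarrow> y \<notin> Q"
  proof (cases "\<exists>y\<in>Q. (y, x) \<in> ?R")
    case False
    with \<open>x \<in> Q\<close> show ?thesis by blast
  next
    case True
    then obtain y where y: "y \<in> Q \<inter> pred_set T lt x" and x: "x \<in> T"
      unfolding pred_set_def by blast
    have "wf (pred_rel T lt x - Id)"
      using assms x unfolding is_tree_def well_order_on_def by blast
    then obtain z where z: "z \<in> Q \<inter> pred_set T lt x"
      and min: "\<And>y. (y, z) \<in> pred_rel T lt x - Id \<Longrightarrow> y \<notin> Q \<inter> pred_set T lt x"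
      using wfE_min[OF _ y] by metis
    have "y \<notin> Q" if "(y, z) \<in> ?R" for y
    proof -
      have "lt y x" "y \<noteq> z"
        using that z x assms unfolding is_tree_def pred_set_def by blast+
      then have "(y, z) \<in> pred_rel T lt x - Id" "y \<in> pred_set T lt x"
        using that z unfolding pred_rel_def pred_set_def by auto
      then show ?thesis using min by blast
    qed
    with z show ?thesis by blast
  qed
qed

lemma tree_height_is_subset:
  assumes "is_tree T lt" "tree_height_is T lt r" "Card_order r" "S \<subseteq> T"
    and "\<forall>a\<in>Field r. \<exists>t\<in>S. pred_set T lt t \<subseteq> S \<and> Restr r (underS r a) \<le>o pred_rel T lt t"
  shows "tree_height_is S lt r"
  unfolding tree_height_is_def
proof (intro conjI ballI)
  fix t assume "t \<in> S"
  then have t: "Well_order (pred_rel T lt t)" "pred_rel T lt t <o r"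
    using assms(1,2,4) unfolding is_tree_def tree_height_is_def by blast+
  have eq: "pred_rel S lt t = Restr (pred_rel T lt t) (pred_set S lt t)"
    using assms(4) unfolding pred_rel_def pred_set_def by auto
  have "pred_set S lt t \<subseteq> pred_set T lt t" using assms(4) unfolding pred_set_def by auto
  then have "|Field (pred_rel S lt t)| <o r"
    using ordLess_Field[OF t(2)] card_of_mono1 ordLeq_ordLess_trans
    unfolding Field_pred_rel by blast
  then show "pred_rel S lt t <o r"
    using ordLess_if_card_of_Field_ordLess[OF assms(3) Well_order_Restr[OF t(1)]] eq by simp
next
  fix a assume "a \<in> Field r"
  then obtain t where "t \<in> S" "pred_set T lt t \<subseteq> S" "Restr r (underS r a) \<le>o pred_rel T lt t"
    using assms(5) by blast
  moreover from this have "pred_rel S lt t = pred_rel T lt t"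
    using assms(4) unfolding pred_rel_def pred_set_def by blast
  ultimately show "\<exists>t\<in>S. Restr r (underS r a) \<le>o pred_rel S lt t" by metis
qed

lemma tree_height_kernel:
  assumes "is_tree T lt" "tree_height_is T lt r" "Cinfinite r"
  obtains W where "W \<subseteq> T" "|W| \<le>o r" "\<And>S. W \<subseteq> S \<Longrightarrow> S \<subseteq> T \<Longrightarrow> tree_height_is S lt r"
proof -
  have r: "Card_order r" using assms(3) by blast
  have "\<forall>a\<in>Field r. \<exists>t. t \<in> T \<and> Restr r (underS r a) \<le>o pred_rel T lt t"
    using assms(2) unfolding tree_height_is_def by blast
  from bchoice[OF this] obtain w
    where w: "\<forall>a\<in>Field r. w a \<in> T \<and> Restr r (underS r a) \<le>o pred_rel T lt (w a)"
    by blast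
  define W where "W = (\<Union>a\<in>Field r. insert (w a) (pred_set T lt (w a)))"
  have "W \<subseteq> T" unfolding W_def pred_set_def using w by blast
  moreover have "|W| \<le>o r" unfolding W_def
  proof (rule UNION_Cinfinite_bound)
    show "|Field r| \<le>o r" using card_of_Field_ordIso[OF r] ordIso_iff_ordLeq by blast
    show "\<forall>a\<in>Field r. |insert (w a) (pred_set T lt (w a))| \<le>o r"
    proof
      fix a assume "a \<in> Field r"
      then have "pred_rel T lt (w a) <o r" using w assms(2) unfolding tree_height_is_def by blast
      then have "|pred_set T lt (w a)| \<le>o r"
        using ordLess_imp_ordLeq[OF ordLess_Field] by (metis Field_pred_rel)
      moreover have "|{w a}| \<le>o r"
        using finite_ordLess_Cinfinite[OF _ assms(3)] ordLess_imp_ordLeq by blast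
      ultimately have "|{w a} \<union> pred_set T lt (w a)| \<le>o r"
        using Un_Cinfinite_bound assms(3) by blast
      then show "|insert (w a) (pred_set T lt (w a))| \<le>o r" by simp
    qed
  qed (rule assms(3))
  moreover have "tree_height_is S lt r" if "W \<subseteq> S" "S \<subseteq> T" for S
  proof (rule tree_height_is_subset[OF assms(1,2) r that(2)], intro ballI)
    fix a assume "a \<in> Field r"
    then have "w a \<in> S" "pred_set T lt (w a) \<subseteq> S" using that(1) unfolding W_def by blast+
    with w \<open>a \<in> Field r\<close> show "\<exists>t\<in>S. pred_set T lt t \<subseteq> S \<and> Restr r (underS r a) \<le>o pred_rel T lt t"
      by blast
  qed
  ultimately show ?thesis by (rule that)
qed

section \<open>Specialising indices\<close>

text \<open>Specialness recast as pointwise data, which normality can decide: \<open>c\<close> indexes antichains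
  covering each fibre of \<open>f\<close>, below a bound \<open>b\<close> attached to the fibre.\<close>

definition specialising_index ::
    "'k rel \<Rightarrow> 'b set \<Rightarrow> ('b \<Rightarrow> 'b \<Rightarrow> bool) \<Rightarrow> ('b \<Rightarrow> 'b) \<Rightarrow> ('b \<Rightarrow> 'k) \<Rightarrow> ('b \<Rightarrow> 'k) \<Rightarrow> bool" where
  "specialising_index r S lt f c b \<longleftrightarrow>
     (\<forall>t\<in>S. f t \<in> S \<and> ((\<exists>s\<in>S. lt s t) \<longrightarrow> lt (f t) t)) \<and>
     (\<forall>t\<in>S. b t \<in> Field r \<and> c t \<in> under r (b (f t))) \<and>
     (\<forall>s\<in>S. \<forall>t\<in>S. f s = f t \<and> c s = c t \<longrightarrow> \<not> lt s t)"

lemma special_tree_specialising_index: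
  assumes "Card_order r" "regularCard r" "special_tree S lt r"
  shows "\<exists>f c b. specialising_index r S lt f c b"
proof -
  obtain f where f: "\<forall>t\<in>S. f t \<in> S" "\<forall>t\<in>S. (\<exists>s\<in>S. lt s t) \<longrightarrow> lt (f t) t"
    and "\<forall>u\<in>S. \<exists>\<A>. |\<A>| <o r \<and> (\<forall>A\<in>\<A>. is_antichain S lt A) \<and> \<Union>\<A> = {s \<in> S. f s = u}"
    using assms(3) unfolding special_tree_def by blast
  from bchoice[OF this(3)] obtain \<A> where \<A>: "\<forall>u\<in>S. |\<A> u| <o r \<and>
      (\<forall>A\<in>\<A> u. is_antichain S lt A) \<and> \<Union>(\<A> u) = {s \<in> S. f s = u}"
    by blast
  have "\<forall>u\<in>S. \<exists>\<beta>. \<beta> \<in> Field r \<and> (\<exists>h. inj_on h (\<A> u) \<and> h ` \<A> u \<subseteq> under r \<beta>)"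
    using \<A> regularCard_bounded_injection[OF assms(1,2)] by blast
  from bchoice[OF this] obtain b
    where b: "\<forall>u\<in>S. b u \<in> Field r \<and> (\<exists>h. inj_on h (\<A> u) \<and> h ` \<A> u \<subseteq> under r (b u))"
    by blast
  then have "\<forall>u\<in>S. \<exists>h. inj_on h (\<A> u) \<and> h ` \<A> u \<subseteq> under r (b u)" by blast
  from bchoice[OF this] obtain h where h: "\<forall>u\<in>S. inj_on (h u) (\<A> u) \<and> h u ` \<A> u \<subseteq> under r (b u)"
    by blast
  have "\<forall>t\<in>S. \<exists>A. A \<in> \<A> (f t) \<and> t \<in> A" using \<A> f(1) by blast
  from bchoice[OF this] obtain A where A: "\<forall>t\<in>S. A t \<in> \<A> (f t) \<and> t \<in> A t" by blast
  have "\<not> lt s t" if "s \<in> S" "t \<in> S" "f s = f t" "h (f s) (A s) = h (f t) (A t)" for s t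
  proof -
    have "A s = A t" using that A h f(1) by (metis inj_on_eq_iff)
    then show ?thesis using that A \<A> f(1) unfolding is_antichain_def by metis
  qed
  then have "specialising_index r S lt f (\<lambda>t. h (f t) (A t)) b"
    unfolding specialising_index_def using f b h A by blast
  then show ?thesis by blast
qed

lemma special_treeI:
  assumes "\<forall>t\<in>T. f t \<in> T" "\<forall>t\<in>T. (\<exists>s\<in>T. lt s t) \<longrightarrow> lt (f t) t"
    and "\<forall>u\<in>T. |c ` {s \<in> T. f s = u}| <o r"
    and "\<forall>s\<in>T. \<forall>t\<in>T. f s = f t \<and> c s = c t \<longrightarrow> \<not> lt s t"
  shows "special_tree T lt r"
  unfolding special_tree_def
proof (intro exI[of _ f] conjI ballI impI)
  fix u assume "u \<in> T"
  let ?\<A> = "(\<lambda>i. {s \<in> T. f s = u \<and> c s = i}) ` c ` {s \<in> T. f s = u}"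
  have "|?\<A>| <o r" using assms(3) \<open>u \<in> T\<close> card_of_image ordLeq_ordLess_trans by blast
  moreover have "\<forall>A\<in>?\<A>. is_antichain T lt A" using assms(4) unfolding is_antichain_def by auto
  moreover have "\<Union>?\<A> = {s \<in> T. f s = u}" by auto
  ultimately show "\<exists>\<A>. |\<A>| <o r \<and> (\<forall>A\<in>\<A>. is_antichain T lt A) \<and> \<Union>\<A> = {s \<in> T. f s = u}"
    by blast
qed (use assms(1,2) in auto)

lemma special_trees_specialising_index:
  assumes "Card_order r" "regularCard r" "\<forall>x\<in>C. special_tree (S x) lt r"
  obtains F c b where "\<forall>x\<in>C. specialising_index r (S x) lt (F x) (c x) (b x)"
proof -
  have "\<forall>x\<in>C. \<exists>f c b. specialising_index r (S x) lt f c b"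
    using special_tree_specialising_index[OF assms(1,2)] assms(3) by blast
  from bchoice[OF this] obtain F where "\<forall>x\<in>C. \<exists>c b. specialising_index r (S x) lt (F x) c b"
    by blast
  from bchoice[OF this] obtain c where "\<forall>x\<in>C. \<exists>b. specialising_index r (S x) lt (F x) (c x) b"
    by blast
  from bchoice[OF this] obtain b where "\<forall>x\<in>C. specialising_index r (S x) lt (F x) (c x) (b x)"
    by blast
  then show ?thesis by (rule that)
qed

section \<open>Lifting the specialisations of traces\<close>

lemma almost_all_traces_small:
  assumes "Cinfinite r" "normal_ideal L (Pkl r L) I" "kappa_plus_complete r I"
    and "is_tree T lt" "tree_height_is T lt r" "inj_on g T" "g ` T \<subseteq> L" "Z \<subseteq> L" "|Z| \<le>o r"
  obtains C where "Pkl r L - C \<in> I" "\<forall>x\<in>C. Z \<subseteq> x"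
    and "\<forall>x\<in>C. tree_height_is (T \<inter> g -` x) lt r \<and> |T \<inter> g -` x| <o cardSuc r"
proof -
  obtain W where W: "W \<subseteq> T" "|W| \<le>o r" "\<And>S. W \<subseteq> S \<Longrightarrow> S \<subseteq> T \<Longrightarrow> tree_height_is S lt r"
    using tree_height_kernel[OF assms(4,5,1)] by blast
  let ?C = "{x \<in> Pkl r L. g ` W \<union> Z \<subseteq> x}"
  have "|g ` W \<union> Z| \<le>o r"
    using Un_Cinfinite_bound[OF ordLeq_transitive[OF card_of_image W(2)] assms(9,1)] .
  moreover have "g ` W \<union> Z \<subseteq> L" using W(1) assms(7,8) by blast
  ultimately have "{x \<in> Pkl r L. \<not> g ` W \<union> Z \<subseteq> x} \<in> I"
    using normal_ideal_not_superset[OF assms(2,3)] by blast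
  moreover have "Pkl r L - ?C = {x \<in> Pkl r L. \<not> g ` W \<union> Z \<subseteq> x}" by blast
  ultimately have "Pkl r L - ?C \<in> I" by simp
  moreover have "\<forall>x\<in>?C. Z \<subseteq> x" by blast
  moreover have "\<forall>x\<in>?C. tree_height_is (T \<inter> g -` x) lt r \<and> |T \<inter> g -` x| <o cardSuc r"
  proof
    fix x assume x: "x \<in> ?C"
    have "tree_height_is (T \<inter> g -` x) lt r" by (rule W(3)) (use W(1) x in auto)
    moreover have "|T \<inter> g -` x| \<le>o |x|"
      by (rule card_of_ordLeqI[of g]) (auto intro: inj_on_subset[OF assms(6)])
    then have "|T \<inter> g -` x| <o cardSuc r" using x ordLeq_ordLess_trans unfolding Pkl_def by blast
    ultimately show "tree_height_is (T \<inter> g -` x) lt r \<and> |T \<inter> g -` x| <o cardSuc r" ..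
  qed
  ultimately show ?thesis by (rule that)
qed

locale trace_specialisation =
  fixes r :: "'k rel" and L :: "'l set" and I :: "'l set set set"
    and D :: "'l set set set set"
    and T :: "'b set" and lt :: "'b \<Rightarrow> 'b \<Rightarrow> bool" and g :: "'b \<Rightarrow> 'l" and e :: "'k \<Rightarrow> 'l"
    and C :: "'l set set"
    and F :: "'l set \<Rightarrow> 'b \<Rightarrow> 'b" and c :: "'l set \<Rightarrow> 'b \<Rightarrow> 'k" and b :: "'l set \<Rightarrow> 'b \<Rightarrow> 'k"
  assumes cinfinite: "Cinfinite r"
    and ideal: "is_ideal (Pkl r L) I" and normal: "normal_ideal L (Pkl r L) I"
    and dense: "dense_in (quot_conds (Pkl r L) I) (quot_le I) D"
    and closed: "kappa_closed r D (quot_le I)"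
    and tree: "is_tree T lt" and height: "tree_height_is T lt r"
    and inj_g: "inj_on g T" and g_into: "g ` T \<subseteq> L" and inj_e: "inj_on e (Field r)"
    and almost_all_C: "Pkl r L - C \<in> I" and e_into: "\<forall>x\<in>C. e ` Field r \<subseteq> x"
    and specialising: "\<forall>x\<in>C. specialising_index r (T \<inter> g -` x) lt (F x) (c x) (b x)"
begin

lemma card_order: "Card_order r"
  using cinfinite by blast

lemma specialising_at:
  assumes "x \<in> C" "t \<in> T" "g t \<in> x"
  shows "F x t \<in> T" "g (F x t) \<in> x" "b x t \<in> Field r" "c x t \<in> under r (b x (F x t))"
    and "\<exists>s\<in>T. g s \<in> x \<and> lt s t \<Longrightarrow> lt (F x t) t"
proof -
  have "specialising_index r (T \<inter> g -` x) lt (F x) (c x) (b x)" using specialising assms(1) by blast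
  then show "F x t \<in> T" "g (F x t) \<in> x" "b x t \<in> Field r" "c x t \<in> under r (b x (F x t))"
    and "\<exists>s\<in>T. g s \<in> x \<and> lt s t \<Longrightarrow> lt (F x t) t"
    using assms(2,3) unfolding specialising_index_def by auto
qed

lemma specialising_antichain:
  assumes "x \<in> C" "s \<in> T" "t \<in> T" "g s \<in> x" "g t \<in> x" "F x s = F x t" "c x s = c x t"
  shows "\<not> lt s t"
  using specialising assms unfolding specialising_index_def by blast

definition below :: "'b \<Rightarrow> 'b" where
  "below t = (if \<exists>s\<in>T. lt s t then SOME s. s \<in> T \<and> lt s t else t)"

lemma below:
  assumes "t \<in> T"
  shows "below t \<in> T \<and> ((\<exists>s\<in>T. lt s t) \<longrightarrow> lt (below t) t)"
proof (cases "\<exists>s\<in>T. lt s t")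
  case True
  then have "\<exists>s. s \<in> T \<and> lt s t" by blast
  then have "(SOME s. s \<in> T \<and> lt s t) \<in> T \<and> lt (SOME s. s \<in> T \<and> lt s t) t" by (rule someI_ex)
  with True show ?thesis unfolding below_def by simp
next
  case False
  with assms show ?thesis unfolding below_def by simp
qed

text \<open>Requiring \<open>g (below t) \<in> x\<close> keeps \<open>t\<close> non-minimal in the trace on \<open>x\<close> whenever it is
  non-minimal in \<open>T\<close>.\<close>

definition value_set :: "'b \<Rightarrow> 'b \<times> 'k \<times> 'k \<Rightarrow> 'l set set" where
  "value_set t v = {x \<in> C. g t \<in> x \<and> g (below t) \<in> x \<and> (F x t, b x t, c x t) = v}"

definition decides :: "'b \<Rightarrow> 'l set set set \<Rightarrow> bool" where
  "decides t d \<longleftrightarrow> (\<exists>v. forces I d (value_set t v))"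

lemma positive_Int_node_coded:
  assumes "t \<in> T" "A \<subseteq> Pkl r L" "A \<notin> I"
  shows "{x \<in> A \<inter> C. g t \<in> x \<and> g (below t) \<in> x} \<notin> I"
proof -
  have fine: "\<forall>\<xi>\<in>L. {x \<in> Pkl r L. \<xi> \<notin> x} \<in> I" using normal unfolding normal_ideal_def by blast
  have "g t \<in> L" "g (below t) \<in> L" using g_into assms(1) below[OF assms(1)] by blast+
  then have "{x \<in> Pkl r L. g t \<notin> x} \<in> I" "{x \<in> Pkl r L. g (below t) \<notin> x} \<in> I"
    using fine by blast+
  then have "(Pkl r L - C) \<union> {x \<in> Pkl r L. g t \<notin> x} \<union> {x \<in> Pkl r L. g (below t) \<notin> x} \<in> I"
    using almost_all_C ideal_Un[OF ideal] by blast
  then have "A - {x \<in> A \<inter> C. g t \<in> x \<and> g (below t) \<in> x} \<in> I"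
    by (rule ideal_subset[OF ideal]) (use assms(2) in auto)
  then show ?thesis using ideal_positive_if_diff[OF ideal assms(3)] by blast
qed

lemma pressing_down_trace:
  assumes "A \<subseteq> Pkl r L" "A \<notin> I" "\<forall>x\<in>A. k x \<in> T \<and> g (k x) \<in> x"
  obtains B v where "B \<subseteq> A" "B \<notin> I" "\<forall>x\<in>B. k x = v"
  using normal_ideal_pressing_down_inj[OF normal assms(1,2) inj_g assms(3)] by blast

lemma pressing_down_Field:
  assumes "A \<subseteq> Pkl r L" "A \<notin> I" "A \<subseteq> C" "\<forall>x\<in>A. k x \<in> Field r"
  obtains B v where "B \<subseteq> A" "B \<notin> I" "\<forall>x\<in>B. k x = v"
proof -
  have "\<forall>x\<in>A. k x \<in> Field r \<and> e (k x) \<in> x" using assms(3,4) e_into by blast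
  then show ?thesis using normal_ideal_pressing_down_inj[OF normal assms(1,2) inj_e] that by blast
qed

lemma exists_decider:
  assumes t: "t \<in> T" and q: "q \<in> quot_conds (Pkl r L) I"
  shows "\<exists>d\<in>D. quot_le I d q \<and> decides t d"
proof -
  obtain A where A: "A \<in> q" using quot_conds_nonempty[OF ideal q] by blast
  have A_pos: "A \<subseteq> Pkl r L" "A \<notin> I" using quot_conds_member[OF ideal q A] by auto
  define A1 where "A1 = {x \<in> A \<inter> C. g t \<in> x \<and> g (below t) \<in> x}"
  have A1: "A1 \<subseteq> Pkl r L" "A1 \<notin> I" "A1 \<subseteq> C" "\<forall>x\<in>A1. g t \<in> x"
    using A_pos positive_Int_node_coded[OF t A_pos] unfolding A1_def by auto
  have "\<forall>x\<in>A1. F x t \<in> T \<and> g (F x t) \<in> x" using specialising_at(1,2) t unfolding A1_def by blast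
  then obtain B1 u where B1: "B1 \<subseteq> A1" "B1 \<notin> I" "\<forall>x\<in>B1. F x t = u"
    by (rule pressing_down_trace[OF A1(1,2)])
  have B1_sub: "B1 \<subseteq> Pkl r L" "B1 \<subseteq> C" using A1 B1(1) by blast+
  have "\<forall>x\<in>B1. b x t \<in> Field r" using specialising_at(3) t B1(1) unfolding A1_def by blast
  then obtain B2 \<beta> where B2: "B2 \<subseteq> B1" "B2 \<notin> I" "\<forall>x\<in>B2. b x t = \<beta>"
    by (rule pressing_down_Field[OF B1_sub(1) B1(2) B1_sub(2)])
  have B2_sub: "B2 \<subseteq> Pkl r L" "B2 \<subseteq> C" using B1_sub B2(1) by blast+
  have "c x t \<in> Field r" if "x \<in> B2" for x
  proof -
    have "x \<in> C" "g t \<in> x" using A1 B1(1) B2(1) that by blast+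
    from specialising_at(4)[OF \<open>x \<in> C\<close> t \<open>g t \<in> x\<close>] show ?thesis by (rule subsetD[OF under_Field])
  qed
  then have "\<forall>x\<in>B2. c x t \<in> Field r" by blast
  then obtain B3 i where B3: "B3 \<subseteq> B2" "B3 \<notin> I" "\<forall>x\<in>B3. c x t = i"
    by (rule pressing_down_Field[OF B2_sub(1) B2(2) B2_sub(2)])
  have "B3 \<subseteq> A" "B3 \<subseteq> value_set t (u, \<beta>, i)"
    using B1 B2 B3 unfolding A1_def value_set_def by auto
  then obtain d where "d \<in> D" "quot_le I d q" "forces I d (value_set t (u, \<beta>, i))"
    using dense_forces_positive_subset[OF ideal dense q A _ B3(2)] forces_mono[OF ideal] by metis
  then show ?thesis unfolding decides_def by blast
qed

definition node_cond_step :: "('b \<Rightarrow> 'l set set set) \<Rightarrow> 'b \<Rightarrow> 'l set set set" where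
  "node_cond_step h t = (SOME d. d \<in> D \<and> (\<forall>s\<in>pred_set T lt t. quot_le I d (h s)) \<and> decides t d)"

definition node_cond :: "'b \<Rightarrow> 'l set set set" where
  "node_cond = wfrec {(s, t). s \<in> T \<and> t \<in> T \<and> lt s t} node_cond_step"

lemma node_cond_eq:
  assumes "t \<in> T"
  shows "node_cond t = node_cond_step node_cond t"
proof -
  let ?R = "{(s, t). s \<in> T \<and> t \<in> T \<and> lt s t}"
  have "node_cond t = node_cond_step (cut node_cond ?R t) t"
    unfolding node_cond_def by (rule wfrec[OF tree_wf[OF tree]])
  moreover have "\<forall>s\<in>pred_set T lt t. cut node_cond ?R t s = node_cond s"
    using assms unfolding pred_set_def cut_def by auto
  then have "node_cond_step (cut node_cond ?R t) t = node_cond_step node_cond t"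
    unfolding node_cond_step_def by (intro arg_cong[where f = Eps] ext) auto
  ultimately show ?thesis by simp
qed

lemma D_quot_conds: "D \<subseteq> quot_conds (Pkl r L) I"
  using dense unfolding dense_in_def by blast

lemma branch_lower_bound:
  assumes "t \<in> T" "\<forall>s\<in>pred_set T lt t. p s \<in> D"
    and "\<forall>s\<in>pred_set T lt t. \<forall>s'\<in>pred_set T lt t. lt s s' \<longrightarrow> quot_le I (p s') (p s)"
  shows "\<exists>q\<in>D. \<forall>s\<in>pred_set T lt t. quot_le I q (p s)"
proof -
  have "\<exists>q\<in>D. \<forall>s\<in>Field (pred_rel T lt t). quot_le I q (p s)"
  proof (rule kappa_closed_lower_bound[OF closed card_order])
    show "Well_order (pred_rel T lt t)" using tree assms(1) unfolding is_tree_def by blast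
    show "pred_rel T lt t <o r" using height assms(1) unfolding tree_height_is_def by blast
    show "\<forall>s\<in>Field (pred_rel T lt t). p s \<in> D" using assms(2) unfolding Field_pred_rel .
    show "\<forall>s\<in>Field (pred_rel T lt t). \<forall>s'\<in>Field (pred_rel T lt t).
        (s, s') \<in> pred_rel T lt t \<longrightarrow> quot_le I (p s') (p s)"
    proof (intro ballI impI)
      fix s s' assume "(s, s') \<in> pred_rel T lt t"
      then have s: "s \<in> pred_set T lt t" "s' \<in> pred_set T lt t" "s = s' \<or> lt s s'"
        unfolding pred_rel_def by auto
      show "quot_le I (p s') (p s)"
      proof (cases "s = s'")
        case True
        then show ?thesis using quot_le_refl[OF ideal] assms(2) s(1) D_quot_conds by blast
      next
        case False
        then show ?thesis using assms(3) s by blast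
      qed
    qed
  qed
  then show ?thesis unfolding Field_pred_rel .
qed

lemma node_cond:
  assumes "t \<in> T"
  shows "node_cond t \<in> D \<and> (\<forall>s\<in>pred_set T lt t. quot_le I (node_cond t) (node_cond s))
    \<and> decides t (node_cond t)"
  using assms
proof (induction t rule: wf_induct_rule[OF tree_wf[OF tree]])
  case (1 t)
  have IH: "node_cond s \<in> D" "\<forall>s'\<in>pred_set T lt s. quot_le I (node_cond s) (node_cond s')"
    if "s \<in> pred_set T lt t" for s
    using 1 that unfolding pred_set_def by auto
  have "\<forall>s\<in>pred_set T lt t. \<forall>s'\<in>pred_set T lt t. lt s s' \<longrightarrow> quot_le I (node_cond s') (node_cond s)"
    using IH(2) unfolding pred_set_def by blast
  then obtain q where q: "q \<in> D" "\<forall>s\<in>pred_set T lt t. quot_le I q (node_cond s)"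
    using branch_lower_bound[OF 1(2)] IH(1) by blast
  have q_cond: "q \<in> quot_conds (Pkl r L) I" using q(1) D_quot_conds by blast
  obtain d where d: "d \<in> D" "quot_le I d q" "decides t d"
    using exists_decider[OF 1(2) q_cond] by blast
  have "\<forall>s\<in>pred_set T lt t. quot_le I d (node_cond s)"
    using quot_le_trans[OF ideal q_cond d(2)] q(2) by blast
  with d have "\<exists>d. d \<in> D \<and> (\<forall>s\<in>pred_set T lt t. quot_le I d (node_cond s)) \<and> decides t d" by blast
  then have "node_cond_step node_cond t \<in> D
      \<and> (\<forall>s\<in>pred_set T lt t. quot_le I (node_cond_step node_cond t) (node_cond s))
      \<and> decides t (node_cond_step node_cond t)"
    unfolding node_cond_step_def by (rule someI_ex)
  then show ?case using node_cond_eq[OF 1(2)] by simp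
qed

definition decided_value :: "'b \<Rightarrow> 'b \<times> 'k \<times> 'k" where
  "decided_value t = (SOME v. forces I (node_cond t) (value_set t v))"

definition parent :: "'b \<Rightarrow> 'b" where "parent t = fst (decided_value t)"
definition bound :: "'b \<Rightarrow> 'k" where "bound t = fst (snd (decided_value t))"
definition index :: "'b \<Rightarrow> 'k" where "index t = snd (snd (decided_value t))"

lemma value_set_decided_value:
  assumes "x \<in> value_set t (decided_value t)"
  shows "x \<in> C" "g t \<in> x" "g (below t) \<in> x" "F x t = parent t" "b x t = bound t" "c x t = index t"
  using assms unfolding value_set_def parent_def bound_def index_def by (auto simp: prod_eq_iff)

lemma forces_decided_value:
  assumes "t \<in> T"
  shows "forces I (node_cond t) (value_set t (decided_value t))"
proof -
  have "\<exists>v. forces I (node_cond t) (value_set t v)"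
    using node_cond[OF assms] unfolding decides_def by blast
  then show ?thesis unfolding decided_value_def by (rule someI_ex)
qed

lemma decided_values_meet:
  assumes "s \<in> T" "t \<in> T" "s = t \<or> lt s t"
  obtains x where "x \<in> value_set s (decided_value s)" "x \<in> value_set t (decided_value t)"
proof -
  have t: "node_cond t \<in> quot_conds (Pkl r L) I" using node_cond[OF assms(2)] D_quot_conds by blast
  have "forces I (node_cond t) (value_set s (decided_value s))"
  proof (cases "s = t")
    case True
    then show ?thesis using forces_decided_value[OF assms(2)] by simp
  next
    case False
    then have "quot_le I (node_cond t) (node_cond s)"
      using node_cond[OF assms(2)] assms unfolding pred_set_def by auto
    moreover have "node_cond s \<in> quot_conds (Pkl r L) I"
      using node_cond[OF assms(1)] D_quot_conds by blast
    ultimately show ?thesis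
      using forces_quot_le[OF ideal _ _ forces_decided_value[OF assms(1)]] by blast
  qed
  then show ?thesis
    using forces_Int_nonempty[OF ideal t _ forces_decided_value[OF assms(2)]] that by blast
qed

lemma parent_less:
  assumes "t \<in> T" "\<exists>s\<in>T. lt s t"
  shows "parent t \<in> T" "lt (parent t) t"
proof -
  obtain x where x: "x \<in> value_set t (decided_value t)"
    using decided_values_meet[OF assms(1,1)] by blast
  note v = value_set_decided_value[OF x]
  have "\<exists>s\<in>T. g s \<in> x \<and> lt s t" using below[OF assms(1)] assms(2) v(3) by blast
  then show "parent t \<in> T" "lt (parent t) t"
    using specialising_at(1,5)[OF v(1) assms(1) v(2)] v(4) by auto
qed

lemma index_under_bound:
  assumes "s \<in> T" "\<exists>s'\<in>T. lt s' s"
  shows "index s \<in> under r (bound (parent s))"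
proof -
  have u: "parent s \<in> T" "lt (parent s) s" using parent_less[OF assms] by blast+
  then obtain x where x: "x \<in> value_set (parent s) (decided_value (parent s))"
      "x \<in> value_set s (decided_value s)"
    using decided_values_meet[OF u(1) assms(1)] by blast
  note vu = value_set_decided_value[OF x(1)] and vs = value_set_decided_value[OF x(2)]
  show ?thesis using specialising_at(4)[OF vs(1) assms(1) vs(2)] vu vs by simp
qed

lemma parent_index_antichain:
  assumes "s \<in> T" "t \<in> T" "parent s = parent t" "index s = index t"
  shows "\<not> lt s t"
proof
  assume "lt s t"
  then obtain x where x: "x \<in> value_set s (decided_value s)" "x \<in> value_set t (decided_value t)"
    using decided_values_meet[OF assms(1,2)] by blast
  note vs = value_set_decided_value[OF x(1)] and vt = value_set_decided_value[OF x(2)]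
  have "\<not> lt s t"
    using specialising_antichain[OF vs(1) assms(1,2) vs(2) vt(2)] vs vt assms(3,4) by simp
  with \<open>lt s t\<close> show False by blast
qed

theorem special: "special_tree T lt r"
proof -
  define f where "f t = (if \<exists>s\<in>T. lt s t then parent t else t)" for t
  define col where "col t = (if \<exists>s\<in>T. lt s t then Some (index t) else None)" for t
  show ?thesis
  proof (rule special_treeI[of T f lt col])
    show "\<forall>t\<in>T. f t \<in> T" "\<forall>t\<in>T. (\<exists>s\<in>T. lt s t) \<longrightarrow> lt (f t) t"
      unfolding f_def using parent_less by auto
    show "\<forall>u\<in>T. |col ` {s \<in> T. f s = u}| <o r"
    proof
      fix u assume "u \<in> T"
      have "col ` {s \<in> T. f s = u} \<subseteq> {None} \<union> Some ` under r (bound u)"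
        using index_under_bound unfolding col_def f_def by auto
      moreover have "|{None} \<union> Some ` under r (bound u)| <o r"
        using Un_Cinfinite_bound_strict[OF finite_ordLess_Cinfinite[OF _ cinfinite]
            ordLeq_ordLess_trans[OF card_of_image card_of_under_ordLess[OF cinfinite]]
            cinfinite]
        by blast
      ultimately show "|col ` {s \<in> T. f s = u}| <o r"
        using card_of_mono1 ordLeq_ordLess_trans by blast
    qed
    show "\<forall>s\<in>T. \<forall>t\<in>T. f s = f t \<and> col s = col t \<longrightarrow> \<not> lt s t"
      using parent_index_antichain unfolding f_def col_def by (auto split: if_splits)
  qed
qed

end

lemma special_if_small_subtrees_special:
  fixes T :: "'b set" and r :: "'k rel" and L :: "'l set"
  assumes "Cinfinite r" "regularCard r" "|Field r| \<le>o |L|"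
    and "is_ideal (Pkl r L) I" "kappa_plus_complete r I" "normal_ideal L (Pkl r L) I"
    and "dense_in (quot_conds (Pkl r L) I) (quot_le I) D" "kappa_closed r D (quot_le I)"
    and "is_tree T lt" "tree_height_is T lt r" "|T| \<le>o |L|"
    and "\<forall>S\<subseteq>T. tree_height_is S lt r \<and> |S| <o cardSuc r \<longrightarrow> special_tree S lt r"
  shows "special_tree T lt r"
proof -
  have r: "Card_order r" using assms(1) by blast
  obtain g where g: "inj_on g T" "g ` T \<subseteq> L"
    using assms(11) unfolding card_of_ordLeq[symmetric] by blast
  obtain e where e: "inj_on e (Field r)" "e ` Field r \<subseteq> L"
    using assms(3) unfolding card_of_ordLeq[symmetric] by blast
  obtain C where C: "Pkl r L - C \<in> I" "\<forall>x\<in>C. e ` Field r \<subseteq> x"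
    and traces: "\<forall>x\<in>C. tree_height_is (T \<inter> g -` x) lt r \<and> |T \<inter> g -` x| <o cardSuc r"
    by (rule almost_all_traces_small[OF assms(1,6,5,9,10) g e(2)
          ordLeq_ordIso_trans[OF card_of_image card_of_Field_ordIso[OF r]]])
  have "\<forall>x\<in>C. special_tree (T \<inter> g -` x) lt r" using assms(12) traces by blast
  then obtain F c b where "\<forall>x\<in>C. specialising_index r (T \<inter> g -` x) lt (F x) (c x) (b x)"
    by (rule special_trees_specialising_index[OF r assms(2)])
  then interpret trace_specialisation r L I D T lt g e C F c b
    using assms(1,4,6-10) g e(1) C by unfold_locales
  show ?thesis by (rule special)
qed

theorem mainTheorem2:
  fixes r :: "'k rel" and L :: "'l set" and I :: "'l set set set"
  assumes "Card_order r" and "Cinfinite r" and "regularCard r"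
    and "r <o |L|"
    and "is_ideal (Pkl r L) I" and "kappa_plus_complete r I" and "normal_ideal L (Pkl r L) I"
    and "\<exists>D. dense_in (quot_conds (Pkl r L) I) (quot_le I) D \<and> kappa_closed r D (quot_le I)"
  shows "RC r L TYPE('b)"
  unfolding RC_def
proof (intro allI impI)
  fix T :: "'b set" and lt
  assume T: "is_tree T lt \<and> tree_height_is T lt r \<and> |T| \<le>o |L| \<and> \<not> special_tree T lt r"
  obtain D where D: "dense_in (quot_conds (Pkl r L) I) (quot_le I) D" "kappa_closed r D (quot_le I)"
    using assms(8) by blast
  have "|Field r| <o |L|"
    by (rule ordIso_ordLess_trans[OF card_of_Field_ordIso[OF assms(1)] assms(4)])
  then have L: "|Field r| \<le>o |L|" by (rule ordLess_imp_ordLeq)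
  show "\<exists>S\<subseteq>T. tree_height_is S lt r \<and> |S| <o cardSuc r \<and> \<not> special_tree S lt r"
  proof (rule ccontr)
    assume no_small_counterexample: "\<not> ?thesis"
    have "special_tree T lt r"
      by (rule special_if_small_subtrees_special[OF assms(2,3) L assms(5-7) D])
        (use T no_small_counterexample in blast)+
    with T show False by blast
  qed
qed

end
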